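(* Fix $x\in\mathbb{R}^n$ and suppose (A1) holds. Then for each $k\in[K]$, with probability at least $1-2K/n^2$, $$\|\tilde S_2\|\le\frac{4\sqrt6}{3}\max_{k'\in[K]}\|x^{(k')}\|_4^2\,(n_k\log n)^{1/2}s_n+4\|x\|_\infty^2\log n.$$
   Context: Let $n\ge2$, $K\ge1$, $Z\in\{0,1\}^{n\times K}$ a community membership matrix (each row exactly one $1$), $\psi_i$ the community of node $i$, $n_k=\sum_iZ_{i,k}\ge1$. $*$ is the Hadamard product, $x^{(k')}=Z_{\cdot,k'}*x$, $e_{k_1}\in\mathbb{R}^K$ the standard basis vector, $\|\cdot\|$ spectral norm. (A1) Stochastic block model: $B\in[0,1]^{K\times K}$ symmetric, $P=ZBZ^\top$; $\{A_{i,j}\}_{i<j}$ independent Bernoulli$(P_{i,j})$, $A_{j,i}=A_{i,j}$, $A_{i,i}=1$; $s_n=\max_{k_1,k_2}B_{k_1,k_2}$. Let $\tilde A$ be an independent copy of $A$ and define the diagonal matrix $\tilde S_2=\sum_{k_1=1}^K\sum_{i:\psi_i=k_1}\sum_{j:\psi_j=k}x_i^2(A-\mathbb{E}A)_{i,j}(\tilde A-\mathbb{E}A)_{i,j}\,e_{k_1}e_{k_1}^\top$. *)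

theory Defs
  imports "HOL-Analysis.Analysis" "HOL-Probability.Probability"
begin

text \<open>Nodes are 0..n-1 (type nat), communities are the elements of a finite type 'k
  (so K = CARD('k)); \<psi> i is the community of node i.  The pair (A, A~) of independent
  SBM adjacency matrices is generated from independent pairs of Bernoulli variables
  on the index set {(i,j). i < j < n}.\<close>

definition sbm_P :: "('k \<Rightarrow> 'k \<Rightarrow> real) \<Rightarrow> (nat \<Rightarrow> 'k) \<Rightarrow> nat \<Rightarrow> nat \<Rightarrow> real" where
  "sbm_P B \<psi> i j = B (\<psi> i) (\<psi> j)"

definition sbm_pairs :: "nat \<Rightarrow> (nat \<times> nat) set" where
  "sbm_pairs n = {(i, j). i < j \<and> j < n}"

definition sbm_pair_pmf :: "nat \<Rightarrow> ('k \<Rightarrow> 'k \<Rightarrow> real) \<Rightarrow> (nat \<Rightarrow> 'k)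
    \<Rightarrow> ((nat \<times> nat) \<Rightarrow> bool \<times> bool) pmf" where
  "sbm_pair_pmf n B \<psi> = Pi_pmf (sbm_pairs n) (False, False)
     (\<lambda>(i, j). pair_pmf (bernoulli_pmf (sbm_P B \<psi> i j)) (bernoulli_pmf (sbm_P B \<psi> i j)))"

definition adjA :: "((nat \<times> nat) \<Rightarrow> bool \<times> bool) \<Rightarrow> nat \<Rightarrow> nat \<Rightarrow> real" where
  "adjA \<omega> i j = (if i = j then 1 else of_bool (fst (\<omega> (min i j, max i j))))"

definition adjA' :: "((nat \<times> nat) \<Rightarrow> bool \<times> bool) \<Rightarrow> nat \<Rightarrow> nat \<Rightarrow> real" where
  "adjA' \<omega> i j = (if i = j then 1 else of_bool (snd (\<omega> (min i j, max i j))))"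

definition EA :: "nat \<Rightarrow> ('k \<Rightarrow> 'k \<Rightarrow> real) \<Rightarrow> (nat \<Rightarrow> 'k) \<Rightarrow> nat \<Rightarrow> nat \<Rightarrow> real" where
  "EA n B \<psi> i j = measure_pmf.expectation (sbm_pair_pmf n B \<psi>) (\<lambda>\<omega>. adjA \<omega> i j)"

definition S2tilde :: "nat \<Rightarrow> ('k::finite \<Rightarrow> 'k \<Rightarrow> real) \<Rightarrow> (nat \<Rightarrow> 'k) \<Rightarrow> (nat \<Rightarrow> real)
    \<Rightarrow> 'k \<Rightarrow> ((nat \<times> nat) \<Rightarrow> bool \<times> bool) \<Rightarrow> real^'k^'k" where
  "S2tilde n B \<psi> x k \<omega> = (\<chi> k1 k2. if k1 = k2 then
      (\<Sum>i\<in>{i. i < n \<and> \<psi> i = k1}. \<Sum>j\<in>{j. j < n \<and> \<psi> j = k}.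
         (x i)^2 * (adjA \<omega> i j - EA n B \<psi> i j) * (adjA' \<omega> i j - EA n B \<psi> i j))
      else 0)"

definition spec_norm :: "real^'k^'k \<Rightarrow> real" where
  "spec_norm M = onorm (\<lambda>v. M *v v)"

definition comm_size :: "nat \<Rightarrow> (nat \<Rightarrow> 'k) \<Rightarrow> 'k \<Rightarrow> nat" where
  "comm_size n \<psi> k = card {i. i < n \<and> \<psi> i = k}"

definition norm4_sq_comm :: "nat \<Rightarrow> (nat \<Rightarrow> 'k) \<Rightarrow> (nat \<Rightarrow> real) \<Rightarrow> 'k \<Rightarrow> real" where
  "norm4_sq_comm n \<psi> x k' = sqrt (\<Sum>i\<in>{i. i < n \<and> \<psi> i = k'}. (x i)^4)"

definition sup_norm :: "nat \<Rightarrow> (nat \<Rightarrow> real) \<Rightarrow> real" where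
  "sup_norm n x = Max ((\<lambda>i. \<bar>x i\<bar>) ` {..<n})"

definition s_n :: "('k::finite \<Rightarrow> 'k \<Rightarrow> real) \<Rightarrow> real" where
  "s_n B = Max (range (\<lambda>(a, b). B a b))"

end

theory Submission
  imports Defs
begin

text \<open>
  Entry \<open>(k1, k1)\<close> of the diagonal matrix \<open>S2tilde\<close> is a sum, over the pairs \<open>i < j\<close>, of the
  independent centred variables \<open>w_ij (A - EA)_ij (A~ - EA)_ij\<close>, where \<open>w_ij\<close> collects \<open>x_i^2\<close>
  and \<open>x_j^2\<close> according to the communities of \<open>i\<close> and \<open>j\<close>.  Each summand is bounded by
  \<open>2 ||x||_inf^2\<close> and has variance at most \<open>w_ij^2 s_n^2\<close>, and the squared weights sum to at
  most \<open>2 n_k max_k' ||x^(k')||_4^4\<close>.  Bernstein's inequality therefore bounds the probability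
  that one entry exceeds the threshold in absolute value by \<open>2 / n^2\<close>.  The spectral norm of a
  diagonal matrix is its largest entry in absolute value, so a union bound over the \<open>K\<close> entries
  concludes.
\<close>

section \<open>Bernstein's inequality for independent bounded summands\<close>

lemma two_mult_three_power_le_fact: "(2::real) * 3 ^ n \<le> fact (n + 2)"
proof (induction n)
  case 0
  then show ?case by simp
next
  case (Suc n)
  have "(2::real) * 3 ^ Suc n = 3 * (2 * 3 ^ n)" by simp
  also have "\<dots> \<le> (real n + 3) * fact (n + 2)"
    using Suc.IH by (intro mult_mono) auto
  also have "\<dots> = fact (Suc n + 2)" by (simp add: algebra_simps)
  finally show ?case .
qed

lemma exp_le_bernstein_quadratic:
  fixes u r :: real
  assumes u: "\<bar>u\<bar> \<le> r" and r: "r < 3"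
  shows "exp u \<le> 1 + u + u\<^sup>2 / (2 * (1 - r / 3))"
proof -
  have "0 \<le> r" using u by linarith
  then have geometric: "(\<lambda>n. u\<^sup>2 / 2 * (r / 3) ^ n) sums (u\<^sup>2 / 2 * (1 / (1 - r / 3)))"
    using r by (intro sums_mult geometric_sums) auto
  \<comment> \<open>Termwise comparison of the exponential series with a geometric one, via \<open>(n + 2)! \<ge> 2 * 3 ^ n\<close>.\<close>
  have term_le: "inverse (fact (n + 2)) * u ^ (n + 2) \<le> u\<^sup>2 / 2 * (r / 3) ^ n" for n
  proof -
    have "u ^ (n + 2) \<le> r ^ n * u\<^sup>2"
    proof -
      have "u ^ n \<le> \<bar>u\<bar> ^ n" by (metis abs_ge_self power_abs)
      also have "\<dots> \<le> r ^ n" by (rule power_mono[OF u]) simp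
      finally have "u ^ n \<le> r ^ n" .
      then show ?thesis unfolding power_add by (intro mult_right_mono) auto
    qed
    then have "inverse (fact (n + 2)) * u ^ (n + 2) \<le> inverse (fact (n + 2)) * (r ^ n * u\<^sup>2)"
      by (rule mult_left_mono) simp
    also have "\<dots> \<le> inverse ((2::real) * 3 ^ n) * (r ^ n * u\<^sup>2)"
      using two_mult_three_power_le_fact[of n] \<open>0 \<le> r\<close>
      by (intro mult_right_mono le_imp_inverse_le) auto
    also have "\<dots> = u\<^sup>2 / 2 * (r / 3) ^ n"
      by (simp add: power_divide field_simps)
    finally show ?thesis .
  qed
  have "exp u - 1 - u = (\<Sum>n. inverse (fact (n + 2)) * u ^ (n + 2))"
    unfolding exp_first_two_terms by simp
  also have "\<dots> \<le> (\<Sum>n. u\<^sup>2 / 2 * (r / 3) ^ n)"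
    by (intro suminf_le term_le summable_exp[THEN summable_ignore_initial_segment]
        sums_summable[OF geometric])
  also have "\<dots> = u\<^sup>2 / (2 * (1 - r / 3))"
    using sums_unique[OF geometric] r by (simp add: field_simps)
  finally show ?thesis by simp
qed

lemma integrable_measure_pmf_bounded:
  fixes g :: "'b \<Rightarrow> real"
  assumes "\<And>y. \<bar>g y\<bar> \<le> M"
  shows "integrable (measure_pmf q) g"
  by (rule measure_pmf.integrable_const_bound[where B = M]) (use assms in auto)

lemma expectation_exp_le_bernstein:
  fixes q :: "'b pmf" and g :: "'b \<Rightarrow> real"
  assumes mean: "measure_pmf.expectation q g = 0"
    and bound: "\<And>y. \<bar>g y\<bar> \<le> M" and l: "0 \<le> l" "l * M < 3"
  shows "measure_pmf.expectation q (\<lambda>y. exp (l * g y))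
       \<le> exp (l\<^sup>2 * measure_pmf.expectation q (\<lambda>y. (g y)\<^sup>2) / (2 * (1 - l * M / 3)))"
proof -
  define c where "c = l\<^sup>2 / (2 * (1 - l * M / 3))"
  have int_g: "integrable (measure_pmf q) g"
    by (rule integrable_measure_pmf_bounded[OF bound])
  have int_g2: "integrable (measure_pmf q) (\<lambda>y. (g y)\<^sup>2)"
  proof (rule integrable_measure_pmf_bounded)
    show "\<bar>(g y)\<^sup>2\<bar> \<le> M\<^sup>2" for y
      using power_mono[OF bound[of y], of 2] by simp
  qed
  have pointwise: "exp (l * g y) \<le> 1 + l * g y + c * (g y)\<^sup>2" for y
  proof -
    have "\<bar>l * g y\<bar> \<le> l * M" using bound[of y] l by (simp add: abs_mult mult_left_mono)
    from exp_le_bernstein_quadratic[OF this l(2)] show ?thesis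
      by (simp add: c_def power_mult_distrib)
  qed
  have "measure_pmf.expectation q (\<lambda>y. exp (l * g y))
      \<le> measure_pmf.expectation q (\<lambda>y. 1 + l * g y + c * (g y)\<^sup>2)"
  proof (intro integral_mono pointwise)
    show "integrable (measure_pmf q) (\<lambda>y. exp (l * g y))"
    proof (rule integrable_measure_pmf_bounded)
      show "\<bar>exp (l * g y)\<bar> \<le> exp (l * M)" for y
        using bound[of y] l(1) by (simp add: mult_left_mono)
    qed
  qed (use int_g int_g2 in simp)
  also have "\<dots> = 1 + c * measure_pmf.expectation q (\<lambda>y. (g y)\<^sup>2)"
    using int_g int_g2 mean by simp
  also have "\<dots> \<le> exp (c * measure_pmf.expectation q (\<lambda>y. (g y)\<^sup>2))"
    by (rule exp_ge_add_one_self)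
  finally show ?thesis by (simp add: c_def)
qed

lemma expectation_Pi_pmf_exp_sum_le_bernstein:
  fixes A :: "'a set" and p :: "'a \<Rightarrow> 'b pmf" and f :: "'a \<Rightarrow> 'b \<Rightarrow> real"
  assumes fin: "finite A"
    and mean: "\<And>a. a \<in> A \<Longrightarrow> measure_pmf.expectation (p a) (f a) = 0"
    and bound: "\<And>a y. a \<in> A \<Longrightarrow> \<bar>f a y\<bar> \<le> M"
    and var: "(\<Sum>a\<in>A. measure_pmf.expectation (p a) (\<lambda>y. (f a y)\<^sup>2)) \<le> V"
    and l: "0 \<le> l" "l * M < 3"
  shows "measure_pmf.expectation (Pi_pmf A d p) (\<lambda>\<omega>. exp (l * (\<Sum>a\<in>A. f a (\<omega> a))))
      \<le> exp (l\<^sup>2 * V / (2 * (1 - l * M / 3)))"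
proof -
  define c where "c = l\<^sup>2 / (2 * (1 - l * M / 3))"
  have "0 \<le> c" unfolding c_def using l by (simp add: mult.commute)
  have "measure_pmf.expectation (Pi_pmf A d p) (\<lambda>\<omega>. exp (l * (\<Sum>a\<in>A. f a (\<omega> a))))
      = measure_pmf.expectation (Pi_pmf A d p) (\<lambda>\<omega>. \<Prod>a\<in>A. exp (l * f a (\<omega> a)))"
    by (simp add: sum_distrib_left exp_sum fin)
  also have "\<dots> = (\<Prod>a\<in>A. measure_pmf.expectation (p a) (\<lambda>y. exp (l * f a y)))"
  proof (rule expectation_prod_Pi_pmf[OF fin])
    show "integrable (measure_pmf (p a)) (\<lambda>y. exp (l * f a y))" if "a \<in> A" for a
    proof (rule integrable_measure_pmf_bounded)
      show "\<bar>exp (l * f a y)\<bar> \<le> exp (l * M)" for y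
        using bound[OF that, of y] l(1) by (simp add: mult_left_mono)
    qed
  qed simp
  also have "\<dots> \<le> (\<Prod>a\<in>A. exp (c * measure_pmf.expectation (p a) (\<lambda>y. (f a y)\<^sup>2)))"
  proof (intro prod_mono conjI)
    fix a assume a: "a \<in> A"
    show "0 \<le> measure_pmf.expectation (p a) (\<lambda>y. exp (l * f a y))"
      by (intro Bochner_Integration.integral_nonneg) auto
    show "measure_pmf.expectation (p a) (\<lambda>y. exp (l * f a y))
        \<le> exp (c * measure_pmf.expectation (p a) (\<lambda>y. (f a y)\<^sup>2))"
      using expectation_exp_le_bernstein[OF mean[OF a] bound[OF a] l]
      by (simp add: c_def mult.commute)
  qed
  also have "\<dots> = exp (c * (\<Sum>a\<in>A. measure_pmf.expectation (p a) (\<lambda>y. (f a y)\<^sup>2)))"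
    by (simp add: exp_sum fin sum_distrib_left)
  also have "\<dots> \<le> exp (c * V)"
    using var \<open>0 \<le> c\<close> by (simp add: mult_left_mono)
  finally show ?thesis by (simp add: c_def)
qed

lemma chernoff_exponent_at_optimum:
  fixes V M t :: real
  assumes "0 < V" "0 \<le> M" "0 < t"
  defines "D \<equiv> V + M * t / 3"
  shows "(t / D)\<^sup>2 * V / (2 * (1 - t / D * M / 3)) - t / D * t = - t\<^sup>2 / (2 * D)"
proof -
  have "0 < D" unfolding D_def using assms by (simp add: add_pos_nonneg)
  have "1 - t / D * M / 3 = (3 * D - M * t) / (3 * D)"
    using \<open>0 < D\<close> by (simp add: field_simps)
  also have "3 * D - M * t = 3 * V" by (simp add: D_def)
  also have "3 * V / (3 * D) = V / D" by simp
  finally have denom: "1 - t / D * M / 3 = V / D" .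
  have "(t / D)\<^sup>2 * V / (2 * (1 - t / D * M / 3)) = (t / D)\<^sup>2 * D / 2"
    unfolding denom using \<open>0 < D\<close> assms by (simp add: field_simps)
  moreover have "(t / D)\<^sup>2 * D / 2 - t / D * t = - t\<^sup>2 / (2 * D)"
    using \<open>0 < D\<close> by (simp add: field_simps power2_eq_square)
  ultimately show ?thesis by linarith
qed

lemma prob_Pi_pmf_sum_ge_bernstein:
  fixes A :: "'a set" and p :: "'a \<Rightarrow> 'b pmf" and f :: "'a \<Rightarrow> 'b \<Rightarrow> real"
  assumes fin: "finite A"
    and mean: "\<And>a. a \<in> A \<Longrightarrow> measure_pmf.expectation (p a) (f a) = 0"
    and bound: "\<And>a y. a \<in> A \<Longrightarrow> \<bar>f a y\<bar> \<le> M"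
    and var: "(\<Sum>a\<in>A. measure_pmf.expectation (p a) (\<lambda>y. (f a y)\<^sup>2)) \<le> V"
    and pos: "0 < V" "0 \<le> M" "0 < t"
  shows "measure_pmf.prob (Pi_pmf A d p) {\<omega>. t \<le> (\<Sum>a\<in>A. f a (\<omega> a))}
      \<le> exp (- t\<^sup>2 / (2 * (V + M * t / 3)))"
proof -
  define D where "D = V + M * t / 3"
  \<comment> \<open>Chernoff's bound at the optimal parameter \<open>l = t / (V + M * t / 3)\<close>.\<close>
  define l where "l = t / D"
  define S where "S \<omega> = (\<Sum>a\<in>A. f a (\<omega> a))" for \<omega>
  have "0 < D" unfolding D_def using pos by (simp add: add_pos_nonneg)
  then have "0 < l" unfolding l_def using pos by simp
  have lM: "l * M < 3"
    using \<open>0 < D\<close> pos unfolding l_def D_def by (simp add: field_simps)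
  have int_exp: "integrable (measure_pmf (Pi_pmf A d p)) (\<lambda>\<omega>. exp (l * S \<omega>))"
  proof (rule integrable_measure_pmf_bounded)
    show "\<bar>exp (l * S \<omega>)\<bar> \<le> exp (l * (card A * M))" for \<omega>
    proof -
      have "S \<omega> \<le> card A * M"
        unfolding S_def using sum_bounded_above[of A "\<lambda>a. f a (\<omega> a)" M] bound
        by (meson abs_le_D1)
      then show ?thesis using \<open>0 < l\<close> by (simp add: mult_left_mono)
    qed
  qed
  have "measure_pmf.prob (Pi_pmf A d p) {\<omega>. t \<le> S \<omega>}
      = measure_pmf.prob (Pi_pmf A d p) {\<omega>\<in>space (measure_pmf (Pi_pmf A d p)). exp (l * t) \<le> exp (l * S \<omega>)}"
    using \<open>0 < l\<close> by simp
  also have "\<dots> \<le> measure_pmf.expectation (Pi_pmf A d p) (\<lambda>\<omega>. exp (l * S \<omega>)) / exp (l * t)"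
    by (rule integral_Markov_inequality_measure[where A = UNIV]) (auto intro: int_exp)
  also have "\<dots> \<le> exp (l\<^sup>2 * V / (2 * (1 - l * M / 3))) / exp (l * t)"
    unfolding S_def
    by (intro divide_right_mono expectation_Pi_pmf_exp_sum_le_bernstein[OF fin mean bound var])
       (use \<open>0 < l\<close> lM in auto)
  also have "\<dots> = exp (l\<^sup>2 * V / (2 * (1 - l * M / 3)) - l * t)" by (rule exp_diff[symmetric])
  also have "\<dots> = exp (- t\<^sup>2 / (2 * D))"
    unfolding l_def D_def by (simp only: chernoff_exponent_at_optimum[OF pos])
  finally show ?thesis by (simp add: S_def D_def)
qed

lemma prob_Pi_pmf_abs_sum_gt_bernstein:
  fixes A :: "'a set" and p :: "'a \<Rightarrow> 'b pmf" and f :: "'a \<Rightarrow> 'b \<Rightarrow> real"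
  assumes fin: "finite A"
    and mean: "\<And>a. a \<in> A \<Longrightarrow> measure_pmf.expectation (p a) (f a) = 0"
    and bound: "\<And>a y. a \<in> A \<Longrightarrow> \<bar>f a y\<bar> \<le> M"
    and var: "(\<Sum>a\<in>A. measure_pmf.expectation (p a) (\<lambda>y. (f a y)\<^sup>2)) \<le> V"
    and pos: "0 < V" "0 \<le> M" "0 \<le> t"
  shows "measure_pmf.prob (Pi_pmf A d p) {\<omega>. t < \<bar>\<Sum>a\<in>A. f a (\<omega> a)\<bar>}
      \<le> 2 * exp (- t\<^sup>2 / (2 * (V + M * t / 3)))"
proof (cases "t = 0")
  case True
  have "measure_pmf.prob (Pi_pmf A d p) {\<omega>. t < \<bar>\<Sum>a\<in>A. f a (\<omega> a)\<bar>} \<le> 1"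
    by (rule measure_pmf.prob_le_1)
  also have "1 \<le> 2 * exp (- t\<^sup>2 / (2 * (V + M * t / 3)))" using True by simp
  finally show ?thesis .
next
  case False
  with pos have "0 < t" by simp
  let ?P = "Pi_pmf A d p" and ?b = "exp (- t\<^sup>2 / (2 * (V + M * t / 3)))"
  have upper: "measure_pmf.prob ?P {\<omega>. t \<le> (\<Sum>a\<in>A. f a (\<omega> a))} \<le> ?b"
    by (rule prob_Pi_pmf_sum_ge_bernstein[OF fin mean bound var pos(1,2) \<open>0 < t\<close>])
  have lower: "measure_pmf.prob ?P {\<omega>. t \<le> (\<Sum>a\<in>A. - f a (\<omega> a))} \<le> ?b"
    by (rule prob_Pi_pmf_sum_ge_bernstein[OF fin _ _ _ pos(1,2) \<open>0 < t\<close>])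
       (use mean bound var in auto)
  have "measure_pmf.prob ?P {\<omega>. t < \<bar>\<Sum>a\<in>A. f a (\<omega> a)\<bar>}
      \<le> measure_pmf.prob ?P ({\<omega>. t \<le> (\<Sum>a\<in>A. f a (\<omega> a))} \<union> {\<omega>. t \<le> (\<Sum>a\<in>A. - f a (\<omega> a))})"
    by (intro measure_pmf.finite_measure_mono) (auto simp: sum_negf)
  also have "\<dots> \<le> measure_pmf.prob ?P {\<omega>. t \<le> (\<Sum>a\<in>A. f a (\<omega> a))}
      + measure_pmf.prob ?P {\<omega>. t \<le> (\<Sum>a\<in>A. - f a (\<omega> a))}"
    by (rule measure_subadditive) (auto simp: measure_pmf.emeasure_eq_measure)
  also have "\<dots> \<le> ?b + ?b" by (rule add_mono[OF upper lower])
  finally show ?thesis by simp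
qed

section \<open>The edge variables of the stochastic block model\<close>

lemma expectation_pair_bernoulli:
  fixes h :: "bool \<times> bool \<Rightarrow> real"
  assumes "0 \<le> p" "p \<le> 1"
  shows "measure_pmf.expectation (pair_pmf (bernoulli_pmf p) (bernoulli_pmf p)) h
     = p * p * h (True, True) + p * (1 - p) * h (True, False) + (1 - p) * p * h (False, True)
       + (1 - p) * (1 - p) * h (False, False)"
proof -
  have UNIV_eq: "(UNIV :: (bool \<times> bool) set) = {(True, True), (True, False), (False, True), (False, False)}"
    by auto
  show ?thesis
    by (subst integral_measure_pmf[where A = UNIV]) (use assms in \<open>auto simp: UNIV_eq pmf_pair\<close>)
qed

definition centred_prod :: "real \<Rightarrow> bool \<times> bool \<Rightarrow> real" where
  "centred_prod p y = (of_bool (fst y) - p) * (of_bool (snd y) - p)"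

lemma expectation_centred_prod:
  "0 \<le> p \<Longrightarrow> p \<le> 1 \<Longrightarrow>
   measure_pmf.expectation (pair_pmf (bernoulli_pmf p) (bernoulli_pmf p)) (centred_prod p) = 0"
  by (simp add: expectation_pair_bernoulli centred_prod_def algebra_simps)

lemma expectation_centred_prod_sq:
  "0 \<le> p \<Longrightarrow> p \<le> 1 \<Longrightarrow>
   measure_pmf.expectation (pair_pmf (bernoulli_pmf p) (bernoulli_pmf p)) (\<lambda>y. (centred_prod p y)\<^sup>2)
    = (p * (1 - p))\<^sup>2"
  by (simp add: expectation_pair_bernoulli centred_prod_def algebra_simps power2_eq_square)

lemma abs_centred_prod_le_1: "0 \<le> p \<Longrightarrow> p \<le> 1 \<Longrightarrow> \<bar>centred_prod p y\<bar> \<le> 1"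
  unfolding centred_prod_def abs_mult
  by (intro mult_le_one) (auto simp: of_bool_def split: if_splits)

lemma expectation_Pi_pmf_component:
  fixes h :: "'b \<Rightarrow> real"
  assumes "finite A" "a \<in> A"
  shows "measure_pmf.expectation (Pi_pmf A d p) (\<lambda>\<omega>. h (\<omega> a)) = measure_pmf.expectation (p a) h"
proof -
  have "measure_pmf.expectation (Pi_pmf A d p) (\<lambda>\<omega>. h (\<omega> a))
      = measure_pmf.expectation (map_pmf (\<lambda>\<omega>. \<omega> a) (Pi_pmf A d p)) h" by simp
  also have "\<dots> = measure_pmf.expectation (p a) h" using assms by (simp add: Pi_pmf_component)
  finally show ?thesis .
qed

lemma finite_sbm_pairs: "finite (sbm_pairs n)"
  by (rule finite_subset[of _ "{..<n} \<times> {..<n}"]) (auto simp: sbm_pairs_def)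

definition sbm_edge_pmf :: "('k \<Rightarrow> 'k \<Rightarrow> real) \<Rightarrow> (nat \<Rightarrow> 'k) \<Rightarrow> nat \<times> nat \<Rightarrow> (bool \<times> bool) pmf" where
  "sbm_edge_pmf B \<psi> e =
     pair_pmf (bernoulli_pmf (sbm_P B \<psi> (fst e) (snd e))) (bernoulli_pmf (sbm_P B \<psi> (fst e) (snd e)))"

lemma sbm_pair_pmf_eq_Pi_pmf:
  "sbm_pair_pmf n B \<psi> = Pi_pmf (sbm_pairs n) (False, False) (sbm_edge_pmf B \<psi>)"
  by (simp add: sbm_pair_pmf_def sbm_edge_pmf_def[abs_def] case_prod_unfold)

lemma EA_diag: "EA n B \<psi> i i = 1"
  by (simp add: EA_def adjA_def)

lemma EA_eq_sbm_P:
  assumes Bsym: "\<forall>a b. B a b = B b a" and Brange: "\<forall>a b. 0 \<le> B a b \<and> B a b \<le> 1"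
    and ij: "i < n" "j < n" "i \<noteq> j"
  shows "EA n B \<psi> i j = sbm_P B \<psi> i j"
proof -
  let ?e = "(min i j, max i j)"
  let ?p = "sbm_P B \<psi> i j"
  have e: "?e \<in> sbm_pairs n" using ij by (auto simp: sbm_pairs_def min_def max_def)
  have p: "sbm_P B \<psi> (min i j) (max i j) = ?p"
    using Bsym by (auto simp: sbm_P_def min_def max_def)
  have "EA n B \<psi> i j = measure_pmf.expectation (sbm_pair_pmf n B \<psi>) (\<lambda>\<omega>. of_bool (fst (\<omega> ?e)))"
    unfolding EA_def adjA_def using ij by simp
  also have "\<dots> = measure_pmf.expectation (pair_pmf (bernoulli_pmf ?p) (bernoulli_pmf ?p))
      (\<lambda>y. of_bool (fst y))"
    unfolding sbm_pair_pmf_def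
    by (subst expectation_Pi_pmf_component[OF finite_sbm_pairs e]) (simp add: p)
  also have "\<dots> = ?p"
    using Brange by (subst expectation_pair_bernoulli) (auto simp: sbm_P_def algebra_simps)
  finally show ?thesis .
qed

lemma le_s_n: "B a b \<le> s_n (B :: 'k::finite \<Rightarrow> 'k \<Rightarrow> real)"
  unfolding s_n_def by (rule Max_ge) (auto simp: image_iff intro!: exI[of _ "(a, b)"])

lemma sum_filter_lessThan:
  fixes g :: "nat \<Rightarrow> 'a::comm_monoid_add"
  shows "(\<Sum>i\<in>{i. i < n \<and> P i}. g i) = (\<Sum>i<n. if P i then g i else 0)"
proof -
  have "{i. i < n \<and> P i} = {i\<in>{..<n}. P i}" by auto
  then show ?thesis by (simp only:) (rule sum.inter_filter, simp)
qed

lemma sum_square_eq_diag_plus_sbm_pairs: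
  fixes F :: "nat \<Rightarrow> nat \<Rightarrow> 'a::comm_monoid_add"
  shows "(\<Sum>i<n. \<Sum>j<n. F i j)
    = (\<Sum>i<n. F i i) + (\<Sum>e\<in>sbm_pairs n. F (fst e) (snd e) + F (snd e) (fst e))"
proof -
  define D where "D = (\<lambda>i. (i, i)) ` {..<n}"
  define L where "L = prod.swap ` sbm_pairs n"
  have split: "{..<n} \<times> {..<n} = D \<union> (sbm_pairs n \<union> L)"
    unfolding D_def L_def sbm_pairs_def by (auto simp: image_iff)
  have disjoint: "D \<inter> (sbm_pairs n \<union> L) = {}" "sbm_pairs n \<inter> L = {}"
    unfolding D_def L_def sbm_pairs_def by auto
  have "(\<Sum>i<n. \<Sum>j<n. F i j) = (\<Sum>e\<in>{..<n} \<times> {..<n}. F (fst e) (snd e))"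
    by (simp add: sum.cartesian_product case_prod_unfold)
  also have "\<dots> = (\<Sum>e\<in>D. F (fst e) (snd e))
      + ((\<Sum>e\<in>sbm_pairs n. F (fst e) (snd e)) + (\<Sum>e\<in>L. F (fst e) (snd e)))"
  proof -
    have "finite D" "finite L" unfolding D_def L_def using finite_sbm_pairs by simp_all
    then show ?thesis
      unfolding split
      by (simp add: sum.union_disjoint[OF _ _ disjoint(1)] sum.union_disjoint[OF _ _ disjoint(2)]
          finite_sbm_pairs)
  qed
  also have "(\<Sum>e\<in>D. F (fst e) (snd e)) = (\<Sum>i<n. F i i)"
    unfolding D_def by (subst sum.reindex) (auto simp: inj_on_def)
  also have "(\<Sum>e\<in>L. F (fst e) (snd e)) = (\<Sum>e\<in>sbm_pairs n. F (snd e) (fst e))"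
    unfolding L_def by (subst sum.reindex) auto
  finally show ?thesis by (simp add: sum.distrib)
qed

section \<open>Concentration of the diagonal of \<open>S2tilde\<close>\<close>

definition block_weight :: "(nat \<Rightarrow> 'k) \<Rightarrow> (nat \<Rightarrow> real) \<Rightarrow> 'k \<Rightarrow> 'k \<Rightarrow> nat \<Rightarrow> nat \<Rightarrow> real" where
  "block_weight \<psi> x k k1 i j = (if \<psi> i = k1 \<and> \<psi> j = k then (x i)\<^sup>2 else 0)"

definition pair_weight :: "(nat \<Rightarrow> 'k) \<Rightarrow> (nat \<Rightarrow> real) \<Rightarrow> 'k \<Rightarrow> 'k \<Rightarrow> nat \<times> nat \<Rightarrow> real" where
  "pair_weight \<psi> x k k1 e = block_weight \<psi> x k k1 (fst e) (snd e) + block_weight \<psi> x k k1 (snd e) (fst e)"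

lemma S2tilde_diag_eq_sum_sbm_pairs:
  fixes B :: "'k::finite \<Rightarrow> 'k \<Rightarrow> real"
  assumes Bsym: "\<forall>a b. B a b = B b a" and Brange: "\<forall>a b. 0 \<le> B a b \<and> B a b \<le> 1"
  shows "S2tilde n B \<psi> x k \<omega> $ k1 $ k1
    = (\<Sum>e\<in>sbm_pairs n. pair_weight \<psi> x k k1 e * centred_prod (sbm_P B \<psi> (fst e) (snd e)) (\<omega> e))"
proof -
  define H where "H i j = (adjA \<omega> i j - EA n B \<psi> i j) * (adjA' \<omega> i j - EA n B \<psi> i j)" for i j
  let ?w = "block_weight \<psi> x k k1"
  have "S2tilde n B \<psi> x k \<omega> $ k1 $ k1 = (\<Sum>i<n. \<Sum>j<n. ?w i j * H i j)"
    unfolding S2tilde_def H_def block_weight_def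
    by (simp add: sum_filter_lessThan) (auto intro!: sum.cong)
  also have "\<dots> = (\<Sum>e\<in>sbm_pairs n. ?w (fst e) (snd e) * H (fst e) (snd e) + ?w (snd e) (fst e) * H (snd e) (fst e))"
    \<comment> \<open>the diagonal terms vanish since \<open>A\<^sub>i\<^sub>i = (\<bbbE>A)\<^sub>i\<^sub>i = 1\<close>\<close>
    by (subst sum_square_eq_diag_plus_sbm_pairs) (simp add: H_def EA_diag adjA_def adjA'_def)
  also have "\<dots> = (\<Sum>e\<in>sbm_pairs n. pair_weight \<psi> x k k1 e * centred_prod (sbm_P B \<psi> (fst e) (snd e)) (\<omega> e))"
  proof (rule sum.cong[OF refl])
    fix e assume e: "e \<in> sbm_pairs n"
    then obtain i j where ij: "e = (i, j)" "i < j" "j < n" by (auto simp: sbm_pairs_def)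
    have "EA n B \<psi> i j = sbm_P B \<psi> i j" "EA n B \<psi> j i = sbm_P B \<psi> i j"
      using EA_eq_sbm_P[OF Bsym Brange, of i n j \<psi>] EA_eq_sbm_P[OF Bsym Brange, of j n i \<psi>] ij Bsym
      by (simp_all add: sbm_P_def)
    then have "H i j = centred_prod (sbm_P B \<psi> i j) (\<omega> e)" "H j i = centred_prod (sbm_P B \<psi> i j) (\<omega> e)"
      using ij by (simp_all add: H_def adjA_def adjA'_def centred_prod_def)
    then show "?w (fst e) (snd e) * H (fst e) (snd e) + ?w (snd e) (fst e) * H (snd e) (fst e)
        = pair_weight \<psi> x k k1 e * centred_prod (sbm_P B \<psi> (fst e) (snd e)) (\<omega> e)"
      using ij by (simp add: pair_weight_def algebra_simps)
  qed
  finally show ?thesis .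
qed

lemma sq_le_sup_norm_sq: "i < n \<Longrightarrow> (x i)\<^sup>2 \<le> (sup_norm n x)\<^sup>2"
proof -
  assume "i < n"
  then have "\<bar>x i\<bar> \<le> sup_norm n x" unfolding sup_norm_def by (intro Max_ge) auto
  then have "\<bar>x i\<bar>\<^sup>2 \<le> (sup_norm n x)\<^sup>2" by (rule power_mono) simp
  then show ?thesis by simp
qed

lemma abs_pair_weight_le:
  assumes "e \<in> sbm_pairs n"
  shows "\<bar>pair_weight \<psi> x k k1 e\<bar> \<le> 2 * (sup_norm n x)\<^sup>2"
proof -
  have weight: "0 \<le> block_weight \<psi> x k k1 i j \<and> block_weight \<psi> x k k1 i j \<le> (sup_norm n x)\<^sup>2"
    if "i < n" for i j
    using sq_le_sup_norm_sq[OF that, of x] by (simp add: block_weight_def)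
  have "fst e < n" "snd e < n" using assms by (auto simp: sbm_pairs_def)
  then show ?thesis
    using weight[of "fst e" "snd e"] weight[of "snd e" "fst e"]
    unfolding pair_weight_def abs_le_iff by linarith
qed

lemma abs_pair_weight_mult_centred_prod_le:
  assumes "e \<in> sbm_pairs n" "0 \<le> p" "p \<le> 1"
  shows "\<bar>pair_weight \<psi> x k k1 e * centred_prod p y\<bar> \<le> 2 * (sup_norm n x)\<^sup>2"
proof -
  have "\<bar>pair_weight \<psi> x k k1 e * centred_prod p y\<bar> \<le> 2 * (sup_norm n x)\<^sup>2 * 1"
    unfolding abs_mult
    by (intro mult_mono abs_pair_weight_le abs_centred_prod_le_1 assms) auto
  then show ?thesis by simp
qed

lemma sum_block_weight_sq:
  "(\<Sum>i<n. \<Sum>j<n. (block_weight \<psi> x k k1 i j)\<^sup>2)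
     = (\<Sum>i\<in>{i. i < n \<and> \<psi> i = k1}. (x i)^4) * real (comm_size n \<psi> k)"
proof -
  have size: "real (comm_size n \<psi> k) = (\<Sum>j\<in>{j. j < n \<and> \<psi> j = k}. 1)"
    by (simp add: comm_size_def)
  show ?thesis
    unfolding size sum_filter_lessThan sum_product
    by (intro sum.cong refl) (auto simp: block_weight_def power2_eq_square power4_eq_xxxx)
qed

lemma sum_power4_le_Max_norm4_sq_comm:
  fixes \<psi> :: "nat \<Rightarrow> 'k::finite"
  shows "(\<Sum>i\<in>{i. i < n \<and> \<psi> i = k1}. (x i)^4) \<le> (MAX k'. norm4_sq_comm n \<psi> x k')\<^sup>2"
proof -
  have "0 \<le> (\<Sum>i\<in>{i. i < n \<and> \<psi> i = k1}. (x i)^4)"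
    by (intro sum_nonneg) (simp add: zero_le_even_power)
  then have "(\<Sum>i\<in>{i. i < n \<and> \<psi> i = k1}. (x i)^4) = (norm4_sq_comm n \<psi> x k1)\<^sup>2"
    unfolding norm4_sq_comm_def by simp
  also have "\<dots> \<le> (MAX k'. norm4_sq_comm n \<psi> x k')\<^sup>2"
    by (intro power_mono Max_ge) (auto simp: norm4_sq_comm_def zero_le_even_power intro!: sum_nonneg)
  finally show ?thesis .
qed

lemma Max_norm4_sq_comm_nonneg: "0 \<le> (MAX k'. norm4_sq_comm n \<psi> x (k' :: 'k::finite))"
  by (rule order_trans[OF _ Max_ge[of _ "norm4_sq_comm n \<psi> x k"]])
    (auto simp: norm4_sq_comm_def zero_le_even_power intro!: sum_nonneg)

lemma sum_pair_weight_sq_le: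
  fixes \<psi> :: "nat \<Rightarrow> 'k::finite"
  shows "(\<Sum>e\<in>sbm_pairs n. (pair_weight \<psi> x k k1 e)\<^sup>2)
    \<le> 2 * real (comm_size n \<psi> k) * (MAX k'. norm4_sq_comm n \<psi> x k')\<^sup>2"
proof -
  define W where "W i j = (block_weight \<psi> x k k1 i j)\<^sup>2" for i j
  have sq_add: "(a + b)\<^sup>2 \<le> 2 * (a\<^sup>2 + b\<^sup>2)" for a b :: real
    using sum_squares_bound[of a b] by (simp add: power2_sum)
  have "(\<Sum>e\<in>sbm_pairs n. (pair_weight \<psi> x k k1 e)\<^sup>2)
      \<le> (\<Sum>e\<in>sbm_pairs n. 2 * (W (fst e) (snd e) + W (snd e) (fst e)))"
    unfolding pair_weight_def W_def by (intro sum_mono sq_add)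
  also have "\<dots> = 2 * ((\<Sum>i<n. \<Sum>j<n. W i j) - (\<Sum>i<n. W i i))"
    by (simp add: sum_square_eq_diag_plus_sbm_pairs sum_distrib_left)
  also have "\<dots> \<le> 2 * (\<Sum>i<n. \<Sum>j<n. W i j)"
    by (simp add: W_def sum_nonneg)
  also have "\<dots> \<le> 2 * ((MAX k'. norm4_sq_comm n \<psi> x k')\<^sup>2 * real (comm_size n \<psi> k))"
    unfolding W_def sum_block_weight_sq
    by (intro mult_left_mono mult_right_mono sum_power4_le_Max_norm4_sq_comm) auto
  finally show ?thesis by (simp add: algebra_simps)
qed

lemma s_n_nonneg: "0 \<le> B a b \<Longrightarrow> 0 \<le> s_n (B :: 'k::finite \<Rightarrow> 'k \<Rightarrow> real)"
  using le_s_n[of B a b] by linarith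

lemma sum_variance_S2tilde_diag_le:
  fixes B :: "'k::finite \<Rightarrow> 'k \<Rightarrow> real"
  assumes Brange: "\<forall>a b. 0 \<le> B a b \<and> B a b \<le> 1"
  shows "(\<Sum>e\<in>sbm_pairs n. measure_pmf.expectation (sbm_edge_pmf B \<psi> e)
      (\<lambda>y. (pair_weight \<psi> x k k1 e * centred_prod (sbm_P B \<psi> (fst e) (snd e)) y)\<^sup>2))
    \<le> 2 * real (comm_size n \<psi> k) * (MAX k'. norm4_sq_comm n \<psi> x k')\<^sup>2 * (s_n B)\<^sup>2"
proof -
  define p where "p e = sbm_P B \<psi> (fst e) (snd e)" for e
  have p01: "0 \<le> p e" "p e \<le> 1" for e using Brange by (auto simp: p_def sbm_P_def)
  have "(\<Sum>e\<in>sbm_pairs n. measure_pmf.expectation (sbm_edge_pmf B \<psi> e)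
      (\<lambda>y. (pair_weight \<psi> x k k1 e * centred_prod (p e) y)\<^sup>2))
      = (\<Sum>e\<in>sbm_pairs n. (pair_weight \<psi> x k k1 e)\<^sup>2 * (p e * (1 - p e))\<^sup>2)"
    using expectation_centred_prod_sq[OF p01]
    by (simp add: sbm_edge_pmf_def p_def power_mult_distrib)
  also have "\<dots> \<le> (\<Sum>e\<in>sbm_pairs n. (pair_weight \<psi> x k k1 e)\<^sup>2 * (s_n B)\<^sup>2)"
  proof (intro sum_mono mult_left_mono power_mono)
    show "p e * (1 - p e) \<le> s_n B" for e
      using p01[of e] mult_left_le[of "1 - p e" "p e"] le_s_n[of B "\<psi> (fst e)" "\<psi> (snd e)"]
      unfolding p_def sbm_P_def by linarith
  qed (use p01 in simp_all)
  also have "\<dots> \<le> 2 * real (comm_size n \<psi> k) * (MAX k'. norm4_sq_comm n \<psi> x k')\<^sup>2 * (s_n B)\<^sup>2"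
    using sum_pair_weight_sq_le[of \<psi> x k k1 n]
    by (simp add: sum_distrib_right[symmetric] mult_right_mono)
  finally show ?thesis by (simp add: p_def)
qed

lemma spec_norm_diag_le:
  fixes M :: "real^'k^'k"
  assumes diag: "\<And>i j. i \<noteq> j \<Longrightarrow> M $ i $ j = 0" and bound: "\<And>i. \<bar>M $ i $ i\<bar> \<le> T"
  shows "spec_norm M \<le> T"
  unfolding spec_norm_def
proof (rule onorm_le)
  fix v :: "real^'k"
  have "0 \<le> T" using bound by (meson abs_ge_zero order_trans)
  have entry: "(M *v v) $ i = M $ i $ i * v $ i" for i
  proof -
    have "(M *v v) $ i = (\<Sum>j\<in>UNIV. M $ i $ j * v $ j)" by (simp add: matrix_vector_mult_def)
    also have "\<dots> = (\<Sum>j\<in>UNIV. if j = i then M $ i $ i * v $ i else 0)"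
      by (intro sum.cong) (auto simp: diag)
    finally show ?thesis by simp
  qed
  have "norm (M *v v) \<le> norm (T *\<^sub>R v)"
    using bound \<open>0 \<le> T\<close>
    by (intro norm_le_componentwise_cart) (simp add: entry abs_mult mult_right_mono)
  then show "norm (M *v v) \<le> T * norm v" using \<open>0 \<le> T\<close> by simp
qed

lemma exp_bernstein_exponent_le:
  fixes m s X N L :: real
  assumes nonneg: "0 \<le> m" "0 \<le> s" "0 \<le> N" and pos: "0 < X" "0 < L"
  defines "T \<equiv> 4 * sqrt 6 / 3 * m * sqrt (N * L) * s + 4 * X * L"
  shows "exp (- T\<^sup>2 / (2 * (2 * N * m\<^sup>2 * s\<^sup>2 + X * T))) \<le> exp (- 2 * L)"
proof -
  define a where "a = 4 * sqrt 6 / 3 * m * sqrt (N * L) * s"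
  have "0 \<le> a" unfolding a_def using assms by simp
  then have "0 < T" unfolding T_def a_def[symmetric] using pos by (intro add_nonneg_pos) simp_all
  have "a\<^sup>2 = 32 / 3 * (m\<^sup>2 * N * L * s\<^sup>2)"
    unfolding a_def using assms by (simp add: power_mult_distrib power_divide)
  moreover have "T\<^sup>2 = a\<^sup>2 + a * (4 * X * L) + 4 * X * L * T"
    unfolding T_def a_def[symmetric] by (simp add: power2_eq_square algebra_simps)
  moreover have "0 \<le> m\<^sup>2 * N * L * s\<^sup>2" "0 \<le> a * (4 * X * L)"
    using assms \<open>0 \<le> a\<close> by simp_all
  ultimately have "4 * L * (2 * N * m\<^sup>2 * s\<^sup>2 + X * T) \<le> T\<^sup>2" by (simp add: algebra_simps)
  moreover have "0 < 2 * N * m\<^sup>2 * s\<^sup>2 + X * T"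
    using nonneg pos \<open>0 < T\<close> by (intro add_nonneg_pos) simp_all
  ultimately show ?thesis by (simp add: field_simps)
qed

lemma exp_neg_two_mult_ln:
  fixes x :: real
  assumes "0 < x"
  shows "exp (- 2 * ln x) = 1 / x\<^sup>2"
proof -
  have "- 2 * ln x = - ln (x\<^sup>2)" using assms by (simp add: ln_realpow)
  then show ?thesis using assms by (simp add: exp_minus inverse_eq_divide)
qed

definition S2tilde_bound :: "nat \<Rightarrow> ('k::finite \<Rightarrow> 'k \<Rightarrow> real) \<Rightarrow> (nat \<Rightarrow> 'k) \<Rightarrow> (nat \<Rightarrow> real) \<Rightarrow> 'k \<Rightarrow> real" where
  "S2tilde_bound n B \<psi> x k = 4 * sqrt 6 / 3 * (MAX k'. norm4_sq_comm n \<psi> x k')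
     * sqrt (real (comm_size n \<psi> k) * ln (real n)) * s_n B + 4 * (sup_norm n x)^2 * ln (real n)"

lemma prob_S2tilde_diag_gt_bound:
  fixes B :: "'k::finite \<Rightarrow> 'k \<Rightarrow> real"
  assumes n2: "n \<ge> 2"
    and Bsym: "\<forall>a b. B a b = B b a"
    and Brange: "\<forall>a b. 0 \<le> B a b \<and> B a b \<le> 1"
  shows "measure_pmf.prob (sbm_pair_pmf n B \<psi>)
      {\<omega>. S2tilde_bound n B \<psi> x k < \<bar>S2tilde n B \<psi> x k \<omega> $ k1 $ k1\<bar>} \<le> 2 / (real n)\<^sup>2"
proof -
  define m where "m = (MAX k'. norm4_sq_comm n \<psi> x k')"
  define X where "X = (sup_norm n x)\<^sup>2"
  define N where "N = real (comm_size n \<psi> k)"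
  define L where "L = ln (real n)"
  define T where "T = S2tilde_bound n B \<psi> x k"
  define f where "f e = (\<lambda>y. pair_weight \<psi> x k k1 e * centred_prod (sbm_P B \<psi> (fst e) (snd e)) y)" for e
  have T_eq: "T = 4 * sqrt 6 / 3 * m * sqrt (N * L) * s_n B + 4 * X * L"
    by (simp add: T_def S2tilde_bound_def m_def X_def N_def L_def)
  have p01: "0 \<le> sbm_P B \<psi> i j" "sbm_P B \<psi> i j \<le> 1" for i j
    using Brange by (auto simp: sbm_P_def)
  have nonneg: "0 \<le> m" "0 \<le> s_n B" "0 \<le> N" "0 < L"
    using n2 s_n_nonneg[of B k k] Brange
    by (simp_all add: m_def N_def L_def Max_norm4_sq_comm_nonneg)
  have "0 \<le> T" unfolding T_eq using nonneg by (simp add: X_def)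
  have event: "{\<omega>. T < \<bar>S2tilde n B \<psi> x k \<omega> $ k1 $ k1\<bar>} = {\<omega>. T < \<bar>\<Sum>e\<in>sbm_pairs n. f e (\<omega> e)\<bar>}"
    by (simp add: S2tilde_diag_eq_sum_sbm_pairs[OF Bsym Brange] f_def)
  have bound: "\<bar>f e y\<bar> \<le> 2 * X" if "e \<in> sbm_pairs n" for e y
    unfolding f_def X_def by (rule abs_pair_weight_mult_centred_prod_le[OF that p01])
  show ?thesis
  proof (cases "X = 0")
    case True
    with bound have "f e y = 0" if "e \<in> sbm_pairs n" for e y using that by fastforce
    with \<open>0 \<le> T\<close> have "{\<omega>. T < \<bar>S2tilde n B \<psi> x k \<omega> $ k1 $ k1\<bar>} = {}" unfolding event by simp
    then show ?thesis unfolding T_def by simp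
  next
    case False
    then have "0 < X" by (simp add: X_def)
    \<comment> \<open>The slack \<open>X * T / 3\<close> keeps \<open>V\<close> positive even if \<open>s_n B = 0\<close>, and turns
      Bernstein's denominator \<open>V + 2 * X * T / 3\<close> into \<open>2 * N * m\<^sup>2 * s_n B\<^sup>2 + X * T\<close>.\<close>
    define V where "V = 2 * N * m\<^sup>2 * (s_n B)\<^sup>2 + X * T / 3"
    have "0 < T" unfolding T_eq using nonneg \<open>0 < X\<close> by (intro add_nonneg_pos) simp_all
    then have "0 < V" unfolding V_def using nonneg \<open>0 < X\<close> by (intro add_nonneg_pos) simp_all
    have mean: "measure_pmf.expectation (sbm_edge_pmf B \<psi> e) (f e) = 0" for e
      using expectation_centred_prod[OF p01] by (simp add: f_def sbm_edge_pmf_def)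
    have "(\<Sum>e\<in>sbm_pairs n. measure_pmf.expectation (sbm_edge_pmf B \<psi> e) (\<lambda>y. (f e y)\<^sup>2)) \<le> V"
      using sum_variance_S2tilde_diag_le[OF Brange, of \<psi> x k k1 n] mult_pos_pos[OF \<open>0 < X\<close> \<open>0 < T\<close>]
      unfolding f_def V_def N_def m_def by linarith
    moreover have "0 \<le> 2 * X" using \<open>0 < X\<close> by simp
    ultimately have "measure_pmf.prob (sbm_pair_pmf n B \<psi>) {\<omega>. T < \<bar>\<Sum>e\<in>sbm_pairs n. f e (\<omega> e)\<bar>}
        \<le> 2 * exp (- T\<^sup>2 / (2 * (V + 2 * X * T / 3)))"
      unfolding sbm_pair_pmf_eq_Pi_pmf
      by (intro prob_Pi_pmf_abs_sum_gt_bernstein[OF finite_sbm_pairs mean bound _ \<open>0 < V\<close> _ \<open>0 \<le> T\<close>])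
    also have "V + 2 * X * T / 3 = 2 * N * m\<^sup>2 * (s_n B)\<^sup>2 + X * T" by (simp add: V_def)
    also have "2 * exp (- T\<^sup>2 / (2 * \<dots>)) \<le> 2 * exp (- 2 * L)"
      using exp_bernstein_exponent_le[OF nonneg(1-3) \<open>0 < X\<close> nonneg(4)] by (simp add: T_eq)
    also have "\<dots> = 2 / (real n)\<^sup>2" using exp_neg_two_mult_ln[of "real n"] n2 by (simp add: L_def)
    finally show ?thesis unfolding T_def[symmetric] event .
  qed
qed

theorem lemmaD2:
  fixes n :: nat and \<psi> :: "nat \<Rightarrow> 'k::finite" and B :: "'k \<Rightarrow> 'k \<Rightarrow> real"
    and x :: "nat \<Rightarrow> real" and k :: 'k
  assumes n2: "n \<ge> 2"
    and nk: "\<forall>k'. comm_size n \<psi> k' \<ge> 1"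
    and Bsym: "\<forall>a b. B a b = B b a"
    and Brange: "\<forall>a b. 0 \<le> B a b \<and> B a b \<le> 1"
  shows "measure_pmf.prob (sbm_pair_pmf n B \<psi>)
      {\<omega>. spec_norm (S2tilde n B \<psi> x k \<omega>)
           \<le> 4 * sqrt 6 / 3 * (MAX k'. norm4_sq_comm n \<psi> x k')
               * sqrt (real (comm_size n \<psi> k) * ln (real n)) * s_n B
             + 4 * (sup_norm n x)^2 * ln (real n)}
    \<ge> 1 - 2 * real CARD('k) / (real n)^2"
proof -
  let ?P = "sbm_pair_pmf n B \<psi>" and ?T = "S2tilde_bound n B \<psi> x k"
  let ?S = "S2tilde n B \<psi> x k"
  let ?E = "{\<omega>. spec_norm (?S \<omega>) \<le> ?T}"
  have "UNIV - ?E \<subseteq> (\<Union>k1. {\<omega>. ?T < \<bar>?S \<omega> $ k1 $ k1\<bar>})"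
  proof
    fix \<omega> assume "\<omega> \<in> UNIV - ?E"
    moreover have "?S \<omega> $ i $ j = 0" if "i \<noteq> j" for i j using that by (simp add: S2tilde_def)
    ultimately have "\<not> (\<forall>k1. \<bar>?S \<omega> $ k1 $ k1\<bar> \<le> ?T)" using spec_norm_diag_le by blast
    then show "\<omega> \<in> (\<Union>k1. {\<omega>. ?T < \<bar>?S \<omega> $ k1 $ k1\<bar>})" by (auto simp: not_le)
  qed
  then have "measure_pmf.prob ?P (UNIV - ?E) \<le> measure_pmf.prob ?P (\<Union>k1. {\<omega>. ?T < \<bar>?S \<omega> $ k1 $ k1\<bar>})"
    by (intro measure_pmf.finite_measure_mono) auto
  also have "\<dots> \<le> (\<Sum>k1\<in>UNIV. measure_pmf.prob ?P {\<omega>. ?T < \<bar>?S \<omega> $ k1 $ k1\<bar>})"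
    by (rule measure_subadditive_finite) (auto simp: measure_pmf.emeasure_eq_measure)
  also have "\<dots> \<le> (\<Sum>k1\<in>(UNIV::'k set). 2 / (real n)\<^sup>2)"
    by (intro sum_mono prob_S2tilde_diag_gt_bound[OF n2 Bsym Brange])
  also have "\<dots> = 2 * real CARD('k) / (real n)\<^sup>2" by simp
  finally have "measure_pmf.prob ?P (UNIV - ?E) \<le> 2 * real CARD('k) / (real n)\<^sup>2" .
  then show ?thesis
    using measure_pmf.prob_compl[of ?E ?P] by (simp add: S2tilde_bound_def)
qed

end
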